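(* For any $m\in\mathbb Z_{\ge1}$, \[\sum_{b=0}^m\sum_{z=0}^{\lfloor (m-b)/2\rfloor}\eta_2(z,b)\,\chi^{\operatorname{Sp}(2m)}_{(2^{m-b-2z},1^{2z})}=\sum_{\ell=0}^{\lfloor m/2\rfloor}\binom{2\ell}{\ell}\sum_{1\le i_1<\cdots<i_{m-2\ell}\le m}\ \prod_{j=1}^{m-2\ell}(x_{i_j}^2+x_{i_j}^{-2})=\sum_{j=0}^{\lfloor m/2\rfloor}\chi^{\operatorname{Sp}(2m)}_{(1^{m-2j})}(x_1^{\pm2},\dots,x_m^{\pm2}).\]
   Context: $\chi_\lambda^{\operatorname{Sp}(2m)}(y_1^{\pm1},\dots,y_m^{\pm1})$ is the character of the irreducible representation of $\operatorname{Sp}(2m,\mathbb C)$ with highest weight the partition $\lambda$, evaluated at a torus element with eigenvalues $y_1^{\pm1},\dots,y_m^{\pm1}$; when the arguments are omitted they are $x_1^{\pm1},\dots,x_m^{\pm1}$. $(2^c,1^d)$ denotes the partition with $c$ parts equal to $2$ followed by $d$ parts equal to $1$; $(1^k)$ has $k$ parts equal to $1$; $\chi_\emptyset=1$. $\eta_2(z,b)=-(b+1)/2$ if $b$ is odd and $\eta_2(z,b)=b/2+\delta(z\text{ even})$ if $b$ is even, where $\delta(P)$ is $1$ if $P$ holds and $0$ otherwise. The inner sum over $1\le i_1<\cdots<i_k\le m$ is $1$ when $k=0$. *)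

theory Defs
  imports Complex_Main "HOL-Combinatorics.Permutations"
begin

definition det_n :: "nat \<Rightarrow> (nat \<Rightarrow> nat \<Rightarrow> complex) \<Rightarrow> complex" where
  "det_n m M = (\<Sum>p | p permutes {1..m}. of_int (sign p) * (\<Prod>i\<in>{1..m}. M i (p i)))"

text \<open>Partitions are functions nat => nat giving the parts lam 1 >= lam 2 >= ... (parts beyond
  the length are 0).  Weyl character formula for Sp(2m):
  chi_lam(x_1^{+-1},...,x_m^{+-1}) =
    det(x_j^{lam_i+m-i+1} - x_j^{-(lam_i+m-i+1)}) / det(x_j^{m-i+1} - x_j^{-(m-i+1)}).\<close>
definition sp_num :: "nat \<Rightarrow> (nat \<Rightarrow> nat) \<Rightarrow> (nat \<Rightarrow> complex) \<Rightarrow> complex" where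
  "sp_num m lam y = det_n m (\<lambda>i j. y j ^ (lam i + m - i + 1) - inverse (y j ^ (lam i + m - i + 1)))"

definition sp_den :: "nat \<Rightarrow> (nat \<Rightarrow> complex) \<Rightarrow> complex" where
  "sp_den m y = sp_num m (\<lambda>_. 0) y"

definition sp_char :: "nat \<Rightarrow> (nat \<Rightarrow> nat) \<Rightarrow> (nat \<Rightarrow> complex) \<Rightarrow> complex" where
  "sp_char m lam y = sp_num m lam y / sp_den m y"

definition part21 :: "nat \<Rightarrow> nat \<Rightarrow> nat \<Rightarrow> nat" where
  "part21 c d i = (if 1 \<le> i \<and> i \<le> c then 2 else if c < i \<and> i \<le> c + d then 1 else 0)"

definition part1 :: "nat \<Rightarrow> nat \<Rightarrow> nat" where
  "part1 k i = (if 1 \<le> i \<and> i \<le> k then 1 else 0)"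

definition eta2 :: "nat \<Rightarrow> nat \<Rightarrow> int" where
  "eta2 z b = (if odd b then - (int b + 1) div 2 else int b div 2 + (if even z then 1 else 0))"

end

theory Submission
  imports Defs "Jordan_Normal_Form.Determinant" "HOL-Computational_Algebra.Formal_Laurent_Series"
begin

text \<open>Let \<open>U\<^sub>a\<close> be the Chebyshev polynomials with \<open>t\<^sup>a - t\<^sup>-\<^sup>a = (t - t\<^sup>-\<^sup>1) U\<^sub>a(t + t\<^sup>-\<^sup>1)\<close>.
  The Weyl character formula presents a symplectic character as a ratio of determinants
  \<open>det (U\<^bsub>\<lambda>\<^sub>i+m-i+1\<^esub>(w\<^sub>j))\<close> with \<open>w\<^sub>j = x\<^sub>j + x\<^sub>j\<^sup>-\<^sup>1\<close>. Adjoining a column in a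
  free variable \<open>W\<close> (for the characters \<open>(1\<^sup>k)\<close>), or the two columns \<open>W, -W\<close> (for the
  characters \<open>(2\<^sup>c,1\<^sup>d)\<close>), and expanding by Laplace along them gives a polynomial identity
  in \<open>W\<close> whose other side is, by a Vandermonde argument, the denominator times
  \<open>\<Prod>\<^sub>j (W - w\<^sub>j)\<close>. Substituting \<open>W = X + X\<^sup>-\<^sup>1\<close> in Laurent series and taking constant
  terms (after dividing by \<open>W\<close> in the second case) collapses the expansion: the constant term
  of \<open>U\<^sub>a(X + X\<^sup>-\<^sup>1)\<close> is \<open>[a odd]\<close>, the one of \<open>U\<^sub>aU\<^bsub>a+2z+1\<^esub>(X + X\<^sup>-\<^sup>1)/(X + X\<^sup>-\<^sup>1)\<close>
  produces \<open>\<eta>\<^sub>2\<close>, and on the product side the constant term of \<open>(X + X\<^sup>-\<^sup>1)\<^sup>n\<close> gives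
  the central binomial coefficients.\<close>

lemma det_n_eq_det: "det_n n M = det (mat n n (\<lambda>(i,j). M (Suc i) (Suc j)))"
proof -
  let ?A = "{0..<n}" and ?B = "{1..n}"
  have bij: "bij_betw Suc ?A ?B"
    by (simp add: bij_betw_def image_Suc_atLeastLessThan atLeastLessThanSuc_atLeastAtMost)
  have inj: "inj_on Suc ?A" by simp
  have bij2: "bij_betw (\<lambda>x. x - 1) ?B ?A"
    by (auto simp: bij_betw_def inj_on_def image_def intro!: bexI[of _ "Suc x" for x])
  have "det (mat n n (\<lambda>(i,j). M (Suc i) (Suc j))) =
     (\<Sum>p\<in>{p. p permutes ?A}. of_int (sign p) * (\<Prod>i=0..<n. M (Suc i) (Suc (p i))))"
    by (subst det_def'[of _ n]) auto
  also have "\<dots> = (\<Sum>q\<in>{q. q permutes ?B}. of_int (sign q) * (\<Prod>i\<in>?B. M i (q i)))"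
  proof (rule sum.reindex_bij_witness[of _ "map_permutation ?B (\<lambda>x. x - 1)" "map_permutation ?A Suc"])
    fix q assume q: "q \<in> {q. q permutes ?B}"
    then show "map_permutation ?A Suc (map_permutation ?B (\<lambda>x. x - 1) q) = q"
      by (intro map_permutation_compose_inv[OF bij2]) auto
    show "map_permutation ?B (\<lambda>x. x - 1) q \<in> {p. p permutes ?A}"
      using q by (intro CollectI map_permutation_permutes[OF bij2]) simp
  next
    fix p assume p: "p \<in> {p. p permutes ?A}"
    then show "map_permutation ?B (\<lambda>x. x - 1) (map_permutation ?A Suc p) = p"
      by (intro map_permutation_compose_inv[OF bij]) auto
    show "map_permutation ?A Suc p \<in> {q. q permutes ?B}"
      using p by (intro CollectI map_permutation_permutes[OF bij]) simp
    have sign: "sign (map_permutation ?A Suc p) = sign p"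
      using p by (intro sign_map_permutation) auto
    have "(\<Prod>i\<in>?B. M i (map_permutation ?A Suc p i)) =
        (\<Prod>i\<in>?A. M (Suc i) (map_permutation ?A Suc p (Suc i)))"
      by (rule prod.reindex_bij_betw[OF bij, symmetric])
    also have "\<dots> = (\<Prod>i\<in>?A. M (Suc i) (Suc (p i)))"
      by (intro prod.cong refl) (simp add: map_permutation_apply[OF inj])
    finally show "of_int (sign (map_permutation ?A Suc p)) * (\<Prod>i\<in>?B. M i (map_permutation ?A Suc p i)) =
       of_int (sign p) * (\<Prod>i=0..<n. M (Suc i) (Suc (p i)))"
      using sign by simp
  qed
  also have "\<dots> = det_n n M" unfolding det_n_def by simp
  finally show ?thesis by simp
qed

lemma det_mat_scale_columns:
  fixes c :: "nat \<Rightarrow> 'a::comm_ring_1"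
  shows "det (mat n n (\<lambda>(i,j). c j * f i j)) = (\<Prod>j<n. c j) * det (mat n n (\<lambda>(i,j). f i j))"
proof -
  have "det (mat n n (\<lambda>(i,j). c j * f i j)) =
    (\<Sum>p\<in>{p. p permutes {0..<n}}. signof p * (\<Prod>i=0..<n. c (p i) * f i (p i)))"
    by (subst det_def'[of _ n]) auto
  also have "\<dots> = (\<Sum>p\<in>{p. p permutes {0..<n}}. (\<Prod>j<n. c j) * (signof p * (\<Prod>i=0..<n. f i (p i))))"
  proof (intro sum.cong refl)
    fix p assume "p \<in> {p. p permutes {0..<n}}"
    then have "(\<Prod>i=0..<n. c (p i)) = (\<Prod>j=0..<n. c j)"
      using prod.permute[of p "{0..<n}" c] by (simp add: comp_def)
    then show "signof p * (\<Prod>i=0..<n. c (p i) * f i (p i)) =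
        (\<Prod>j<n. c j) * (signof p * (\<Prod>i=0..<n. f i (p i)))"
      by (simp add: prod.distrib atLeast0LessThan)
  qed
  also have "\<dots> = (\<Prod>j<n. c j) * det (mat n n (\<lambda>(i,j). f i j))"
    by (subst det_def'[of _ n]) (auto simp: sum_distrib_left)
  finally show ?thesis .
qed

lemma poly_eq_smult_prod_roots:
  fixes p :: "'a::idom poly"
  assumes "degree p \<le> k" "inj_on z {..<k}" "\<And>j. j < k \<Longrightarrow> poly p (z j) = 0"
  shows "p = smult (coeff p k) (\<Prod>j<k. [:- z j, 1:])"
  using assms
proof (induction k arbitrary: p)
  case 0
  then show ?case by (auto elim!: degree_eq_zeroE)
next
  case (Suc k)
  have "[:- z k, 1:] dvd p" using Suc.prems(3)[of k] by (simp add: poly_eq_0_iff_dvd)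
  then obtain q where q: "p = [:- z k, 1:] * q" by (elim dvdE)
  have deg_q: "degree q \<le> k"
  proof (cases "q = 0")
    case False
    then have "degree p = Suc (degree q)" unfolding q by (subst degree_mult_eq) auto
    then show ?thesis using Suc.prems(1) by simp
  qed simp
  have inj: "inj_on z {..<k}" using Suc.prems(2) by (rule inj_on_subset) auto
  have roots: "poly q (z j) = 0" if "j < k" for j
  proof -
    have "z j \<noteq> z k" using Suc.prems(2) that by (auto dest: inj_onD)
    moreover have "poly p (z j) = 0" using Suc.prems(3) that by simp
    ultimately show ?thesis unfolding q by simp
  qed
  have IH: "q = smult (coeff q k) (\<Prod>j<k. [:- z j, 1:])" using Suc.IH[OF deg_q inj roots] .
  have "coeff p (Suc k) = coeff q k"
    unfolding q using deg_q by (simp add: coeff_eq_0)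
  then show ?case
    by (subst q, subst IH) (simp add: mult_smult_right)
qed

text \<open>\<open>cheb a\<close> is \<open>U\<^sub>a\<close>, i.e.\ the classical Chebyshev polynomial \<open>U\<^bsub>a-1\<^esub>(X/2)\<close> of the
  second kind.\<close>
fun cheb :: "nat \<Rightarrow> 'a::comm_ring_1 poly" where
  "cheb 0 = 0"
| "cheb (Suc 0) = 1"
| "cheb (Suc (Suc n)) = [:0, 1:] * cheb (Suc n) - cheb n"

lemma poly_cheb_inverse:
  fixes t :: "'a::field"
  assumes "t \<noteq> 0"
  shows "t ^ a - inverse (t ^ a) = (t - inverse t) * poly (cheb a) (t + inverse t)"
proof (induction a rule: cheb.induct)
  case (3 n)
  have "t ^ Suc (Suc n) - inverse (t ^ Suc (Suc n)) =
        (t + inverse t) * (t ^ Suc n - inverse (t ^ Suc n)) - (t ^ n - inverse (t ^ n))"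
    using assms by (simp add: field_simps)
  also have "\<dots> = (t - inverse t) * poly (cheb (Suc (Suc n))) (t + inverse t)"
    unfolding 3 by (simp add: algebra_simps)
  finally show ?case .
qed auto

lemma poly_cheb_Suc_Suc_inverse:
  fixes t :: "'a::field"
  assumes "t \<noteq> 0" "t \<noteq> inverse t"
  shows "poly (cheb (Suc (Suc a))) (t + inverse t) =
    poly (cheb a) (t + inverse t) + t ^ Suc a + inverse t ^ Suc a"
proof -
  have "inverse t * t = 1" "t * inverse t = 1" using assms(1) by simp_all
  then have cancel: "t * inverse t ^ Suc a = inverse t ^ a" "inverse t * t ^ Suc a = t ^ a"
    by (simp_all add: mult.assoc[symmetric])
  have "(t - inverse t) * (t ^ Suc a + inverse t ^ Suc a) =
      t ^ Suc (Suc a) + t * inverse t ^ Suc a - inverse t * t ^ Suc a - inverse t ^ Suc (Suc a)"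
    by (simp add: algebra_simps)
  also have "\<dots> = (t ^ Suc (Suc a) - inverse (t ^ Suc (Suc a))) - (t ^ a - inverse (t ^ a))"
    unfolding cancel by (simp add: power_inverse)
  finally have step: "(t - inverse t) * (t ^ Suc a + inverse t ^ Suc a) =
      (t ^ Suc (Suc a) - inverse (t ^ Suc (Suc a))) - (t ^ a - inverse (t ^ a))" .
  have "(t - inverse t) * poly (cheb (Suc (Suc a))) (t + inverse t) =
      t ^ Suc (Suc a) - inverse (t ^ Suc (Suc a))"
    by (rule poly_cheb_inverse[OF assms(1), symmetric])
  also have "\<dots> = (t ^ a - inverse (t ^ a)) + (t - inverse t) * (t ^ Suc a + inverse t ^ Suc a)"
    unfolding step by simp
  also have "\<dots> = (t - inverse t) * (poly (cheb a) (t + inverse t) + t ^ Suc a + inverse t ^ Suc a)"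
    unfolding poly_cheb_inverse[OF assms(1)] by (simp add: algebra_simps)
  finally show ?thesis using assms(2) by simp
qed

lemma degree_cheb_le: "degree (cheb a :: 'a::comm_ring_1 poly) \<le> a - 1"
proof (induction a rule: cheb.induct)
  case (3 n)
  have "degree ([:0, 1:] * cheb (Suc n) :: 'a poly) \<le> Suc n"
    using 3(1) degree_pCons_le[of 0 "cheb (Suc n) :: 'a poly"] by simp
  moreover have "degree (cheb n :: 'a poly) \<le> Suc n" using 3(2) by linarith
  ultimately show ?case by (simp add: degree_diff_le)
qed auto

lemma coeff_cheb_top: "a > 0 \<Longrightarrow> coeff (cheb a :: 'a::comm_ring_1 poly) (a - 1) = 1"
proof (induction a rule: cheb.induct)
  case (3 n)
  have "degree (cheb n :: 'a poly) \<le> n - 1" by (rule degree_cheb_le)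
  then have "degree (cheb n :: 'a poly) < Suc n" by linarith
  then have "coeff (cheb n :: 'a poly) (Suc n) = 0" by (rule coeff_eq_0)
  then show ?case using 3(1) by simp
qed auto

lemma poly_cheb_minus: "poly (cheb a) (- v) = (-1) ^ Suc a * poly (cheb a :: 'a::comm_ring_1 poly) v"
  by (induction a rule: cheb.induct) (auto simp: algebra_simps)

lemma cheb_mult_cheb:
  "cheb (Suc p) * cheb (Suc q) = cheb p * cheb q + (cheb (p + q + 1) :: 'a::comm_ring_1 poly)"
proof (induction p arbitrary: q rule: less_induct)
  case (less p)
  show ?case
  proof (cases p)
    case (Suc p')
    have IH: "cheb (Suc p') * cheb (Suc (Suc q)) = cheb p' * cheb (Suc q) + (cheb (p' + Suc q + 1) :: 'a poly)"
      using less Suc by blast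
    have "cheb (Suc p) * cheb (Suc q) = cheb (Suc p') * ([:0,1:] * cheb (Suc q)) - (cheb p' * cheb (Suc q) :: 'a poly)"
      using Suc by (simp add: algebra_simps)
    also have "\<dots> = cheb (Suc p') * cheb (Suc (Suc q)) + cheb (Suc p') * cheb q - cheb p' * cheb (Suc q)"
      by (simp add: algebra_simps)
    also have "\<dots> = cheb p * cheb q + cheb (p + q + 1)"
      using IH Suc by (simp add: algebra_simps)
    finally show ?thesis .
  qed simp
qed

declare cheb.simps(3) [simp del]

definition cheb_det :: "nat \<Rightarrow> (nat \<Rightarrow> nat) \<Rightarrow> (nat \<Rightarrow> 'a::comm_ring_1) \<Rightarrow> 'a" where
  "cheb_det k \<alpha> z = det (mat k k (\<lambda>(i,j). poly (cheb (\<alpha> i)) (z j)))"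

lemma cheb_det_cong:
  assumes "\<And>i. i < k \<Longrightarrow> \<alpha> i = \<beta> i" "\<And>j. j < k \<Longrightarrow> z j = z' j"
  shows "cheb_det k \<alpha> z = cheb_det k \<beta> z'"
proof -
  have "mat k k (\<lambda>(i,j). poly (cheb (\<alpha> i)) (z j)) = mat k k (\<lambda>(i,j). poly (cheb (\<beta> i)) (z' j))"
    by (rule eq_matI) (auto simp: assms)
  then show ?thesis unfolding cheb_det_def by simp
qed

lemma cheb_det_fun_upd [simp]: "cheb_det k \<alpha> (z(k := v)) = cheb_det k \<alpha> z"
  by (rule cheb_det_cong) auto

lemma cheb_det_eq_0_if_columns_eq:
  assumes "i < k" "j < k" "i \<noteq> j" "z i = z j"
  shows "cheb_det k \<alpha> z = 0"
  unfolding cheb_det_def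
  by (rule det_identical_columns[of _ k i j]) (use assms in \<open>auto intro!: eq_vecI\<close>)

lemma cheb_det_laplace:
  "cheb_det (Suc k) \<alpha> z = (\<Sum>i<Suc k. (-1)^(i+k) * poly (cheb (\<alpha> i)) (z k) *
      cheb_det k (\<lambda>i'. \<alpha> (insert_index i i')) z)"
proof -
  let ?A = "mat (Suc k) (Suc k) (\<lambda>(i,j). poly (cheb (\<alpha> i)) (z j))"
  have "cheb_det (Suc k) \<alpha> z = (\<Sum>i<Suc k. ?A $$ (i,k) * cofactor ?A i k)"
    unfolding cheb_det_def by (rule laplace_expansion_column) simp_all
  also have "\<dots> = (\<Sum>i<Suc k. (-1)^(i+k) * poly (cheb (\<alpha> i)) (z k) *
      cheb_det k (\<lambda>i'. \<alpha> (insert_index i i')) z)"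
  proof (intro sum.cong refl)
    fix i assume i: "i \<in> {..<Suc k}"
    have "mat_delete ?A i k = mat k k (\<lambda>(i',j). poly (cheb (\<alpha> (insert_index i i'))) (z j))"
      unfolding mat_delete_def insert_index_def by (rule eq_matI) auto
    then show "?A $$ (i,k) * cofactor ?A i k = (-1)^(i+k) * poly (cheb (\<alpha> i)) (z k) *
      cheb_det k (\<lambda>i'. \<alpha> (insert_index i i')) z"
      using i unfolding cofactor_def cheb_det_def by simp
  qed
  finally show ?thesis .
qed

text \<open>Laplace expansion along a last column of indeterminates: its coefficients vanish at
  the \<open>z j\<close>, and the leading one is the complementary minor.\<close>
lemma cheb_det_expansion_poly:
  fixes z :: "nat \<Rightarrow> 'a::idom"
  shows "(\<Sum>i<Suc k. smult ((-1)^(i+k) * cheb_det k (\<lambda>i'. Suc k - insert_index i i') z)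
            (cheb (Suc k - i)))
       = smult ((-1)^k * cheb_det k (\<lambda>i. k - i) z) (\<Prod>j<k. [:- z j, 1:])"
    (is "?B = _")
proof -
  define c where "c i = (-1)^(i+k) * cheb_det k (\<lambda>i'. Suc k - insert_index i i') z" for i
  have poly_B: "poly ?B v = cheb_det (Suc k) (\<lambda>i. Suc k - i) (z(k := v))" for v
    by (subst cheb_det_laplace) (simp add: poly_sum algebra_simps)
  have c0: "c 0 = (-1)^k * cheb_det k (\<lambda>i. k - i) z"
    unfolding c_def by (simp cong: cheb_det_cong)
  have lead: "coeff ?B k = c 0"
  proof -
    have "coeff ?B k = c 0 * coeff (cheb (Suc k) :: 'a poly) k +
        (\<Sum>i<k. c (Suc i) * coeff (cheb (k - i) :: 'a poly) k)"
      unfolding coeff_sum coeff_smult c_def[symmetric] by (subst sum.lessThan_Suc_shift) simp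
    also have "(\<Sum>i<k. c (Suc i) * coeff (cheb (k - i) :: 'a poly) k) = 0"
    proof (intro sum.neutral ballI)
      fix i assume "i \<in> {..<k}"
      moreover have "degree (cheb (k - i) :: 'a poly) \<le> k - i - 1" by (rule degree_cheb_le)
      ultimately have "coeff (cheb (k - i) :: 'a poly) k = 0" by (intro coeff_eq_0) auto
      then show "c (Suc i) * coeff (cheb (k - i) :: 'a poly) k = 0" by simp
    qed
    finally show ?thesis using coeff_cheb_top[of "Suc k", where 'a='a] by simp
  qed
  show ?thesis
  proof (cases "inj_on z {..<k}")
    case True
    have "?B = smult (coeff ?B k) (\<Prod>j<k. [:- z j, 1:])"
    proof (rule poly_eq_smult_prod_roots[OF _ True])
      show "degree ?B \<le> k"
        by (intro degree_sum_le)
          (auto intro!: order.trans[OF degree_smult_le] order.trans[OF degree_cheb_le])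
      show "poly ?B (z j) = 0" if "j < k" for j
        unfolding poly_B by (rule cheb_det_eq_0_if_columns_eq[of j _ k]) (use that in auto)
    qed
    then show ?thesis by (simp only: lead c0)
  next
    case False
    then obtain i j where ij: "i < k" "j < k" "i \<noteq> j" "z i = z j"
      unfolding inj_on_def by auto
    then show ?thesis by (simp add: cheb_det_eq_0_if_columns_eq[OF ij])
  qed
qed

lemma cheb_det_adjoin_column:
  fixes z :: "nat \<Rightarrow> 'a::idom"
  shows "cheb_det (Suc k) (\<lambda>i. Suc k - i) (z(k := w)) =
    (-1)^k * cheb_det k (\<lambda>i. k - i) z * (\<Prod>j<k. w - z j)"
proof -
  have "cheb_det (Suc k) (\<lambda>i. Suc k - i) (z(k := w)) =
      poly (\<Sum>i<Suc k. smult ((-1)^(i+k) * cheb_det k (\<lambda>i'. Suc k - insert_index i i') z)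
        (cheb (Suc k - i))) w"
    by (subst cheb_det_laplace) (simp add: poly_sum algebra_simps)
  then show ?thesis unfolding cheb_det_expansion_poly by (simp add: poly_prod)
qed

lemma sp_num_eq_cheb_det:
  assumes "\<forall>j\<in>{1..m}. y j \<noteq> 0"
  shows "sp_num m lam y = (\<Prod>j<m. y (Suc j) - inverse (y (Suc j))) *
     cheb_det m (\<lambda>i. lam (Suc i) + m - i) (\<lambda>j. y (Suc j) + inverse (y (Suc j)))"
proof -
  have "mat m m (\<lambda>(i,j). y (Suc j) ^ (lam (Suc i) + m - Suc i + 1) -
           inverse (y (Suc j) ^ (lam (Suc i) + m - Suc i + 1))) =
     mat m m (\<lambda>(i,j). (y (Suc j) - inverse (y (Suc j))) *
        poly (cheb (lam (Suc i) + m - i)) (y (Suc j) + inverse (y (Suc j))))"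
    (is "?M = ?N")
  proof (rule eq_matI)
    fix i j assume ij: "i < dim_row ?N" "j < dim_col ?N"
    then have "y (Suc j) \<noteq> 0" "Suc (lam (Suc i) + m - Suc i) = lam (Suc i) + m - i"
      using assms by auto
    then show "?M $$ (i, j) = ?N $$ (i, j)"
      using ij by (simp add: poly_cheb_inverse del: power_Suc)
  qed auto
  then show ?thesis
    unfolding sp_num_def det_n_eq_det cheb_det_def by (simp add: det_mat_scale_columns)
qed

lemma
  assumes "\<forall>j\<in>{1..m}. y j \<noteq> 0" "sp_den m y \<noteq> 0"
  shows sp_char_eq_cheb_det_ratio:
      "sp_char m lam y = cheb_det m (\<lambda>i. lam (Suc i) + m - i) (\<lambda>j. y (Suc j) + inverse (y (Suc j))) /
                         cheb_det m (\<lambda>i. m - i) (\<lambda>j. y (Suc j) + inverse (y (Suc j)))"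
    and cheb_det_sp_den_nonzero:
      "cheb_det m (\<lambda>i. m - i) (\<lambda>j. y (Suc j) + inverse (y (Suc j))) \<noteq> 0"
proof -
  have den: "sp_den m y = (\<Prod>j<m. y (Suc j) - inverse (y (Suc j))) *
     cheb_det m (\<lambda>i. m - i) (\<lambda>j. y (Suc j) + inverse (y (Suc j)))"
    unfolding sp_den_def using sp_num_eq_cheb_det[OF assms(1), of "\<lambda>_. 0"] by simp
  then show "cheb_det m (\<lambda>i. m - i) (\<lambda>j. y (Suc j) + inverse (y (Suc j))) \<noteq> 0"
    using assms(2) by auto
  show "sp_char m lam y = cheb_det m (\<lambda>i. lam (Suc i) + m - i) (\<lambda>j. y (Suc j) + inverse (y (Suc j))) /
                         cheb_det m (\<lambda>i. m - i) (\<lambda>j. y (Suc j) + inverse (y (Suc j)))"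
    using den assms(2) unfolding sp_char_def sp_num_eq_cheb_det[OF assms(1)] by simp
qed

definition poly_fls :: "'a::comm_ring_1 poly \<Rightarrow> 'a fls \<Rightarrow> 'a fls" where
  "poly_fls p t = poly (map_poly fls_const p) t"

lemma poly_fls_0 [simp]: "poly_fls 0 t = 0"
  by (simp add: poly_fls_def)

lemma poly_fls_pCons [simp]: "poly_fls (pCons a p) t = fls_const a + t * poly_fls p t"
  by (simp add: poly_fls_def map_poly_pCons)

lemma poly_fls_1 [simp]: "poly_fls 1 t = 1"
  by (simp add: one_pCons)

lemma poly_fls_add [simp]: "poly_fls (p + q) t = poly_fls p t + poly_fls q t"
proof -
  have "map_poly fls_const (p + q) = map_poly fls_const p + map_poly fls_const q"
    by (rule poly_eqI) (simp add: coeff_map_poly fls_plus_const)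
  then show ?thesis by (simp add: poly_fls_def)
qed

lemma poly_fls_smult [simp]: "poly_fls (smult c p) t = fls_const c * poly_fls p t"
  by (simp add: poly_fls_def map_poly_smult)

lemma poly_fls_uminus [simp]: "poly_fls (- p) t = - poly_fls p t"
  using poly_fls_smult[of "-1" p t] by simp

lemma poly_fls_diff [simp]: "poly_fls (p - q) t = poly_fls p t - poly_fls q t"
  using poly_fls_add[of p "- q" t] by simp

lemma poly_fls_mult [simp]: "poly_fls (p * q) t = poly_fls p t * poly_fls q t"
  by (induction p rule: pCons_induct) (simp_all add: algebra_simps)

lemma poly_fls_sum: "poly_fls (\<Sum>i\<in>A. f i) t = (\<Sum>i\<in>A. poly_fls (f i) t)"
  by (induction A rule: infinite_finite_induct) auto

lemma poly_fls_prod: "poly_fls (\<Prod>i\<in>A. f i) t = (\<Prod>i\<in>A. poly_fls (f i) t)"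
  by (induction A rule: infinite_finite_induct) auto

lemma poly_fls_cheb: "poly_fls (cheb a) t = poly (cheb a) t"
  by (induction a rule: cheb.induct) (simp_all add: cheb.simps(3))

lemma fls_const_prod: "fls_const (\<Prod>i\<in>A. f i) = (\<Prod>i\<in>A. fls_const (f i))"
  by (induction A rule: infinite_finite_induct) (auto simp flip: fls_const_mult_const)

abbreviation fls_X_plus_inv :: "complex fls" where "fls_X_plus_inv \<equiv> fls_X + fls_X_inv"

definition ct :: "complex poly \<Rightarrow> complex" where
  "ct G = fls_nth (poly_fls G fls_X_plus_inv) 0"

definition ct_div :: "complex poly \<Rightarrow> complex" where
  "ct_div G = fls_nth (poly_fls G fls_X_plus_inv / fls_X_plus_inv) 0"

lemma fls_X_neq_X_inv: "(fls_X :: 'a::zero_neq_one fls) \<noteq> fls_X_inv"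
proof
  assume "(fls_X :: 'a fls) = fls_X_inv"
  then have "fls_nth (fls_X :: 'a fls) 1 = fls_nth fls_X_inv 1" by simp
  then show False by simp
qed

lemma fls_X_plus_inv_nonzero: "fls_X_plus_inv \<noteq> 0"
proof
  assume "fls_X_plus_inv = 0"
  then have "fls_nth fls_X_plus_inv 1 = 0" by simp
  then show False by simp
qed

lemma ct_smult: "ct (smult c p) = c * ct p"
  by (simp add: ct_def)

lemma ct_sum: "ct (\<Sum>i\<in>A. f i) = (\<Sum>i\<in>A. ct (f i))"
  by (simp add: ct_def poly_fls_sum fls_nth_sum)

lemma ct_div_add: "ct_div (p + q) = ct_div p + ct_div q"
  by (simp add: ct_div_def add_divide_distrib)

lemma ct_div_smult: "ct_div (smult c p) = c * ct_div p"
  unfolding ct_div_def poly_fls_smult by (simp only: times_divide_eq_right[symmetric] fls_mult_const_nth)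

lemma ct_div_sum: "ct_div (\<Sum>i\<in>A. f i) = (\<Sum>i\<in>A. ct_div (f i))"
  by (simp add: ct_div_def poly_fls_sum fls_nth_sum sum_divide_distrib)

lemma ct_div_X_mult: "ct_div ([:0,1:] * G) = ct G"
  using fls_X_plus_inv_nonzero by (simp add: ct_div_def ct_def)

text \<open>Because \<open>U\<^bsub>a+2\<^esub> - U\<^sub>a\<close> becomes \<open>X\<^bsup>a+1\<^esup> + X\<^bsup>-a-1\<^esup>\<close>, the constant term only remembers
  the parity of \<open>a\<close>.\<close>
lemma ct_cheb: "ct (cheb a) = (if odd a then 1 else 0)"
proof (induction a rule: cheb.induct)
  case (3 n)
  have "poly_fls (cheb (Suc (Suc n))) fls_X_plus_inv =
      poly (cheb n) fls_X_plus_inv + fls_X ^ Suc n + fls_X_inv ^ Suc n"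
    using poly_cheb_Suc_Suc_inverse[of fls_X n, unfolded fls_inverse_X] fls_X_neq_X_inv
    by (simp add: poly_fls_cheb)
  then show ?case using 3(2) by (simp add: ct_def poly_fls_cheb del: power_Suc)
qed (simp_all add: ct_def)

lemma ct_div_cheb: "ct_div (cheb a) = (if a mod 4 = 2 then 1 else 0)"
proof (induction a rule: cheb.induct)
  case 2
  have "fls_subdegree fls_X_plus_inv = -1" by (rule fls_subdegree_eqI) auto
  then have "fls_nth (inverse fls_X_plus_inv) 0 = 0" by simp
  then show ?case by (simp add: ct_div_def divide_inverse)
next
  case (3 n)
  have "ct_div (cheb (Suc (Suc n))) = ct (cheb (Suc n)) - ct_div (cheb n)"
    using fls_X_plus_inv_nonzero by (simp add: ct_div_def ct_def diff_divide_distrib cheb.simps(3))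
  moreover have "Suc (Suc n) mod 4 = 2 \<longleftrightarrow> even n \<and> n mod 4 \<noteq> 2" by presburger
  moreover have "odd n \<Longrightarrow> n mod 4 \<noteq> 2" by presburger
  ultimately show ?case using 3(2) by (simp add: ct_cheb)
qed (simp add: ct_div_def)

lemma ct_div_cheb_mult_cheb_even: "ct_div (cheb a * cheb (a + 2 * z)) = 0"
proof (induction a)
  case (Suc a)
  have "cheb (Suc a) * cheb (Suc a + 2 * z) = cheb a * cheb (a + 2 * z) + (cheb (Suc (2 * (a + z))) :: complex poly)"
    using cheb_mult_cheb[of a "a + 2 * z"] by (simp add: algebra_simps)
  moreover have "Suc (2 * (a + z)) mod 4 \<noteq> 2" by presburger
  ultimately show ?case using Suc by (simp add: ct_div_add ct_div_cheb)
qed (simp add: ct_div_def)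

lemma ct_div_cheb_mult_cheb_odd:
  "ct_div (cheb a * cheb (a + 2 * z + 1)) = of_nat (if even z then (a + 1) div 2 else a div 2)"
proof (induction a)
  case (Suc a)
  have "cheb (Suc a) * cheb (Suc a + 2 * z + 1) =
      cheb a * cheb (a + 2 * z + 1) + (cheb (2 * (a + z + 1)) :: complex poly)"
    using cheb_mult_cheb[of a "a + 2 * z + 1"] by (simp add: algebra_simps)
  moreover have "(if even z then (Suc a + 1) div 2 else Suc a div 2) =
      (if even z then (a + 1) div 2 else a div 2) + (if 2 * (a + z + 1) mod 4 = 2 then 1 else 0)"
    by presburger
  ultimately show ?case using Suc by (simp add: ct_div_add ct_div_cheb)
qed (simp add: ct_div_def)

lemma eta2_eq:
  "of_int (eta2 z b) = (-1) ^ b * (of_nat (if even z then (Suc b + 1) div 2 else Suc b div 2) :: complex)"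
  unfolding eta2_def
  by (cases "even b"; cases "even z") (auto elim!: evenE oddE simp: algebra_simps)

definition ct_binom :: "nat \<Rightarrow> complex" where
  "ct_binom n = (if even n then of_nat (n choose (n div 2)) else 0)"

lemma fls_nth_power_X_plus_X_inv:
  assumes "r > 0"
  shows "fls_nth ((fls_X ^ r + fls_X_inv ^ r) ^ n) 0 = ct_binom n"
proof -
  have "fls_nth ((fls_X ^ r + fls_X_inv ^ r) ^ n :: complex fls) 0 =
     (\<Sum>k\<le>n. of_nat (n choose k) * fls_nth ((fls_X ^ r) ^ k * (fls_X_inv ^ r) ^ (n - k)) 0)"
    unfolding binomial_ring fls_nth_sum
    by (intro sum.cong refl) (simp add: fls_of_nat mult.assoc)
  also have "\<dots> = (\<Sum>k\<le>n. if k = n div 2 \<and> even n then of_nat (n choose k) else 0)"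
  proof (intro sum.cong refl)
    fix k assume k: "k \<in> {..n}"
    have "(fls_X ^ r) ^ k * (fls_X_inv ^ r) ^ (n - k) =
        (fls_X ^ (r * k) * fls_X_inv ^ (r * (n - k)) :: complex fls)"
      by (simp add: power_mult)
    also have "\<dots> = fls_shift (- int (r * k)) (fls_shift (int (r * (n - k))) 1)"
      by (simp add: fls_X_power_times_conv_shift fls_X_inv_power_conv_shift_1)
    finally have "(fls_X ^ r) ^ k * (fls_X_inv ^ r) ^ (n - k) =
        (fls_shift (- int (r * k)) (fls_shift (int (r * (n - k))) 1) :: complex fls)" .
    moreover have "(int (r * k) = int (r * (n - k))) = (k = n div 2 \<and> even n)"
      using assms k by simp presburger
    ultimately show "of_nat (n choose k) * fls_nth ((fls_X ^ r) ^ k * (fls_X_inv ^ r) ^ (n - k)) 0 =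
       (if k = n div 2 \<and> even n then of_nat (n choose k) else (0 :: complex))"
      by auto
  qed
  also have "\<dots> = ct_binom n"
    unfolding ct_binom_def by (cases "even n") (auto simp: sum.delta)
  finally show ?thesis .
qed

lemma fls_nth_prod_sub_const:
  fixes T :: "complex fls"
  assumes "finite J" "\<And>n. fls_nth (T ^ n) 0 = ct_binom n"
  shows "fls_nth (\<Prod>j\<in>J. T - fls_const (c j)) 0 =
     (-1) ^ card J * (\<Sum>B\<in>Pow J. (\<Prod>j\<in>B. c j) * ct_binom (card J - card B))"
proof -
  have "(\<Prod>j\<in>J. T - fls_const (c j)) = (\<Prod>j\<in>J. fls_const (- c j) + T)"
    by simp
  also have "\<dots> = (\<Sum>B\<in>Pow J. (\<Prod>j\<in>B. fls_const (- c j)) * (\<Prod>j\<in>J - B. T))"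
    by (rule prod_add[OF assms(1)])
  also have "\<dots> = (\<Sum>B\<in>Pow J. fls_const (\<Prod>j\<in>B. - c j) * T ^ (card J - card B))"
  proof (intro sum.cong refl)
    fix B assume "B \<in> Pow J"
    then have "card (J - B) = card J - card B"
      using assms(1) by (meson PowD card_Diff_subset finite_subset)
    then show "(\<Prod>j\<in>B. fls_const (- c j)) * (\<Prod>j\<in>J - B. T) =
        fls_const (\<Prod>j\<in>B. - c j) * T ^ (card J - card B)"
      by (simp add: fls_const_prod)
  qed
  finally have "fls_nth (\<Prod>j\<in>J. T - fls_const (c j)) 0 =
      (\<Sum>B\<in>Pow J. (\<Prod>j\<in>B. - c j) * ct_binom (card J - card B))"
    by (simp add: fls_nth_sum assms(2))
  also have "\<dots> = (\<Sum>B\<in>Pow J. (-1) ^ card J * ((\<Prod>j\<in>B. c j) * ct_binom (card J - card B)))"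
  proof (intro sum.cong refl)
    fix B assume "B \<in> Pow J"
    then have le: "card B \<le> card J" using assms(1) by (simp add: card_mono)
    have sign: "(-1::complex) ^ card B * ct_binom (card J - card B) =
        (-1) ^ card J * ct_binom (card J - card B)"
      using le by (cases "even (card J - card B)") (auto simp: ct_binom_def minus_one_power_iff)
    have "(\<Prod>j\<in>B. - c j) * ct_binom (card J - card B) =
        (\<Prod>j\<in>B. c j) * ((-1) ^ card B * ct_binom (card J - card B))"
      by (simp add: prod_uminus mult_ac)
    then show "(\<Prod>j\<in>B. - c j) * ct_binom (card J - card B) =
        (-1) ^ card J * ((\<Prod>j\<in>B. c j) * ct_binom (card J - card B))"
      by (simp only: sign mult_ac)
  qed
  finally show ?thesis by (simp add: sum_distrib_left)
qed

lemma sum_even_diff_reindex: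
  fixes g :: "nat \<Rightarrow> 'a::comm_monoid_add"
  shows "(\<Sum>k\<in>{0..m}. if even (m - k) then g k else 0) = (\<Sum>l\<in>{0..m div 2}. g (m - 2 * l))"
proof -
  have inj: "inj_on (\<lambda>l. m - 2 * l) {0..m div 2}" by (auto simp: inj_on_def)
  have "(\<Sum>l\<in>{0..m div 2}. g (m - 2 * l)) =
      (\<Sum>l\<in>{0..m div 2}. if even (m - (m - 2 * l)) then g (m - 2 * l) else 0)"
    by (intro sum.cong refl) auto
  also have "\<dots> = (\<Sum>k\<in>(\<lambda>l. m - 2 * l) ` {0..m div 2}. if even (m - k) then g k else 0)"
    by (rule sum.reindex[OF inj, symmetric, unfolded comp_def])
  also have "\<dots> = (\<Sum>k\<in>{0..m}. if even (m - k) then g k else 0)"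
  proof (rule sum.mono_neutral_left)
    show "\<forall>k\<in>{0..m} - (\<lambda>l. m - 2 * l) ` {0..m div 2}. (if even (m - k) then g k else 0) = 0"
    proof
      fix k assume k: "k \<in> {0..m} - (\<lambda>l. m - 2 * l) ` {0..m div 2}"
      show "(if even (m - k) then g k else 0) = 0"
      proof (cases "even (m - k)")
        case True
        then obtain l where "m - k = 2 * l" by (elim evenE)
        then have "k = m - 2 * l" "l \<in> {0..m div 2}" using k by auto
        then show ?thesis using k by auto
      qed simp
    qed
  qed auto
  finally show ?thesis by simp
qed

definition cbinom_esym_sum :: "nat \<Rightarrow> (nat \<Rightarrow> complex) \<Rightarrow> complex" where
  "cbinom_esym_sum m f = (\<Sum>l=0..m div 2. of_nat ((2 * l) choose l) *
     (\<Sum>S | S \<subseteq> {1..m} \<and> card S = m - 2 * l. \<Prod>i\<in>S. f i))"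

lemma fls_nth_prod_sub_const_eq_cbinom_esym_sum:
  fixes T :: "complex fls"
  assumes "\<And>n. fls_nth (T ^ n) 0 = ct_binom n"
  shows "fls_nth (\<Prod>j<m. T - fls_const (f (Suc j))) 0 = (-1) ^ m * cbinom_esym_sum m f"
proof -
  have "(\<Sum>B\<in>Pow {1..m}. (\<Prod>j\<in>B. f j) * ct_binom (m - card B)) =
      (\<Sum>k\<in>{0..m}. \<Sum>B | B \<in> Pow {1..m} \<and> card B = k. (\<Prod>j\<in>B. f j) * ct_binom (m - card B))"
  proof (rule sum.group[symmetric])
    show "card ` Pow {1..m} \<subseteq> {0..m}"
      using card_mono[of "{1..m}"] by fastforce
  qed auto
  also have "\<dots> = (\<Sum>k\<in>{0..m}. if even (m - k) then of_nat ((m - k) choose ((m - k) div 2)) *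
       (\<Sum>S | S \<subseteq> {1..m} \<and> card S = k. \<Prod>i\<in>S. f i) else 0)"
    by (intro sum.cong refl) (auto simp: ct_binom_def sum_distrib_left mult.commute)
  also have "\<dots> = cbinom_esym_sum m f"
    unfolding sum_even_diff_reindex cbinom_esym_sum_def by (intro sum.cong refl) auto
  finally have "(\<Sum>B\<in>Pow {1..m}. (\<Prod>j\<in>B. f j) * ct_binom (m - card B)) = cbinom_esym_sum m f" .
  moreover have "(\<Prod>j<m. T - fls_const (f (Suc j))) = (\<Prod>i\<in>{1..m}. T - fls_const (f i))"
    using prod.atLeast1_atMost_eq[of "\<lambda>i. T - fls_const (f i)" m] by simp
  ultimately show ?thesis using fls_nth_prod_sub_const[of "{1..m}" T f] assms by simp
qed

lemma cbinom_esym_sum_eq_sum_sp_char_part1: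
  assumes y: "\<forall>j\<in>{1..m}. y j \<noteq> 0" "sp_den m y \<noteq> 0"
  shows "cbinom_esym_sum m (\<lambda>i. y i + inverse (y i)) = (\<Sum>j=0..m div 2. sp_char m (part1 (m - 2 * j)) y)"
proof -
  define w where "w = (\<lambda>j. y (Suc j) + inverse (y (Suc j)))"
  define D where "D = cheb_det m (\<lambda>i. m - i) w"
  define A where "A k = cheb_det m (\<lambda>i. part1 k (Suc i) + m - i) w" for k
  have "D \<noteq> 0" using cheb_det_sp_den_nonzero[OF y] by (simp add: D_def w_def)
  have chi: "sp_char m (part1 k) y = A k / D" for k
    using sp_char_eq_cheb_det_ratio[OF y] by (simp add: D_def w_def A_def)
  have "(\<Sum>i<Suc m. smult ((-1)^(i+m) * A i) (cheb (Suc m - i))) =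
      smult ((-1)^m * D) (\<Prod>j<m. [:- w j, 1:])"
  proof -
    have "cheb_det m (\<lambda>i'. Suc m - insert_index i i') w = A i" for i
      unfolding A_def by (rule cheb_det_cong) (auto simp: part1_def insert_index_def)
    then show ?thesis using cheb_det_expansion_poly[of m w] by (simp add: D_def)
  qed
  then have "ct (\<Sum>i<Suc m. smult ((-1)^(i+m) * A i) (cheb (Suc m - i))) =
      ct (smult ((-1)^m * D) (\<Prod>j<m. [:- w j, 1:]))" by simp
  moreover have "ct (\<Sum>i<Suc m. smult ((-1)^(i+m) * A i) (cheb (Suc m - i))) =
      (\<Sum>l=0..m div 2. A (m - 2 * l))"
  proof -
    have "ct (\<Sum>i<Suc m. smult ((-1)^(i+m) * A i) (cheb (Suc m - i))) =
        (\<Sum>i\<in>{0..m}. if even (m - i) then A i else 0)"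
      unfolding ct_sum ct_smult ct_cheb by (intro sum.cong) (auto simp: minus_one_power_iff)
    then show ?thesis by (simp only: sum_even_diff_reindex)
  qed
  moreover have "ct (smult ((-1)^m * D) (\<Prod>j<m. [:- w j, 1:])) =
      D * cbinom_esym_sum m (\<lambda>i. y i + inverse (y i))"
  proof -
    have "poly_fls (\<Prod>j<m. [:- w j, 1:]) fls_X_plus_inv =
        (\<Prod>j<m. fls_X_plus_inv - fls_const (y (Suc j) + inverse (y (Suc j))))"
      unfolding poly_fls_prod by (intro prod.cong refl) (simp add: w_def flip: fls_const_uminus)
    then show ?thesis
      using fls_nth_prod_sub_const_eq_cbinom_esym_sum[OF fls_nth_power_X_plus_X_inv[of 1],
          where f = "\<lambda>i. y i + inverse (y i)", simplified]
      by (simp add: ct_smult ct_def)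
  qed
  ultimately show ?thesis
    using \<open>D \<noteq> 0\<close> by (simp add: chi sum_divide_distrib[symmetric] field_simps)
qed

text \<open>In the expansion of \<open>det (U\<^bsub>m+2-i\<^esub>(z\<^sub>j))\<close>, \<open>z = (u\<^sub>0, \<dots>, u\<^bsub>m-1\<^esub>, W, -W)\<close>, along its
  last two columns, \<open>term2 m u q p\<close> is the contribution of deleting row \<open>q\<close> and then row
  \<open>p\<close> of the remaining rows, once \<open>ct_div\<close> is applied.\<close>
definition rho :: "nat \<Rightarrow> nat \<Rightarrow> nat" where
  "rho m i = Suc (Suc m) - i"

definition minor2 :: "nat \<Rightarrow> (nat \<Rightarrow> complex) \<Rightarrow> nat \<Rightarrow> nat \<Rightarrow> complex" where
  "minor2 m u q p = cheb_det m (\<lambda>i. rho m (insert_index q (insert_index p i))) u"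

definition sign2 :: "nat \<Rightarrow> nat \<Rightarrow> nat \<Rightarrow> complex" where
  "sign2 m q p = (-1) ^ (q + Suc m) * (-1) ^ Suc (rho m q) * (-1) ^ (p + m)"

definition term2 :: "nat \<Rightarrow> (nat \<Rightarrow> complex) \<Rightarrow> nat \<Rightarrow> nat \<Rightarrow> complex" where
  "term2 m u q p =
    sign2 m q p * minor2 m u q p * ct_div (cheb (rho m q) * cheb (rho m (insert_index q p)))"

definition num21 :: "nat \<Rightarrow> (nat \<Rightarrow> complex) \<Rightarrow> nat \<Rightarrow> nat \<Rightarrow> complex" where
  "num21 m u b z = cheb_det m (\<lambda>i. part21 (m - b - 2 * z) (2 * z) (Suc i) + m - i) u"

lemma cheb_det_adjoin_pm_column:
  fixes u :: "nat \<Rightarrow> 'a::idom"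
  shows "cheb_det (Suc (Suc m)) (rho m) ((u(m := v))(Suc m := - v)) =
    2 * cheb_det m (\<lambda>i. m - i) u * v * (\<Prod>j<m. u j ^ 2 - v ^ 2)"
proof -
  have "rho m = (\<lambda>i. Suc (Suc m) - i)" by (simp add: rho_def fun_eq_iff)
  then have "cheb_det (Suc (Suc m)) (rho m) ((u(m := v))(Suc m := - v)) =
      (-1) ^ Suc m * cheb_det (Suc m) (\<lambda>i. Suc m - i) (u(m := v)) * (\<Prod>j<Suc m. - v - (u(m := v)) j)"
    by (simp only: cheb_det_adjoin_column)
  also have "cheb_det (Suc m) (\<lambda>i. Suc m - i) (u(m := v)) =
      (-1) ^ m * cheb_det m (\<lambda>i. m - i) u * (\<Prod>j<m. v - u j)"
    by (rule cheb_det_adjoin_column)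
  also have "(\<Prod>j<Suc m. - v - (u(m := v)) j) = (\<Prod>j<m. - v - u j) * (- v - v)"
    by (simp add: prod.lessThan_Suc)
  also have "(-1) ^ Suc m * ((-1) ^ m * cheb_det m (\<lambda>i. m - i) u * (\<Prod>j<m. v - u j)) *
      ((\<Prod>j<m. - v - u j) * (- v - v)) =
      2 * cheb_det m (\<lambda>i. m - i) u * v * ((\<Prod>j<m. v - u j) * (\<Prod>j<m. - v - u j))"
    by (simp add: algebra_simps flip: power_add)
  also have "(\<Prod>j<m. v - u j) * (\<Prod>j<m. - v - u j) = (\<Prod>j<m. u j ^ 2 - v ^ 2)"
    by (subst prod.distrib[symmetric]) (intro prod.cong refl, simp add: algebra_simps power2_eq_square)
  finally show ?thesis .
qed

lemma cheb_det_laplace_two_columns: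
  "cheb_det (Suc (Suc m)) (rho m) ((u(m := v))(Suc m := - v)) =
    (\<Sum>q<Suc (Suc m). \<Sum>p<Suc m.
       sign2 m q p * minor2 m u q p * poly (cheb (rho m q) * cheb (rho m (insert_index q p))) v)"
proof -
  have "cheb_det (Suc (Suc m)) (rho m) ((u(m := v))(Suc m := - v)) =
      (\<Sum>q<Suc (Suc m). (-1)^(q + Suc m) * poly (cheb (rho m q)) (- v) *
         cheb_det (Suc m) (\<lambda>i. rho m (insert_index q i)) (u(m := v)))"
    by (subst cheb_det_laplace) simp
  also have "\<dots> = (\<Sum>q<Suc (Suc m). (-1)^(q + Suc m) * ((-1) ^ Suc (rho m q) * poly (cheb (rho m q)) v) *
         (\<Sum>p<Suc m. (-1)^(p + m) * poly (cheb (rho m (insert_index q p))) v * minor2 m u q p))"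
    by (intro sum.cong refl) (subst cheb_det_laplace, simp add: poly_cheb_minus minor2_def)
  also have "\<dots> = (\<Sum>q<Suc (Suc m). \<Sum>p<Suc m.
       sign2 m q p * minor2 m u q p * poly (cheb (rho m q) * cheb (rho m (insert_index q p))) v)"
    unfolding sum_distrib_left by (intro sum.cong refl) (simp add: sign2_def algebra_simps)
  finally show ?thesis .
qed

lemma poly_fls_quadratic:
  "poly_fls [:c + 2, 0, -1:] fls_X_plus_inv = fls_const c - (fls_X ^ 2 + fls_X_inv ^ 2)"
proof -
  have "fls_X * fls_X_inv = (1 :: complex fls)"
    by (simp add: fls_X_times_conv_shift fls_X_inv_conv_shift_1)
  then have square: "fls_X_plus_inv * fls_X_plus_inv = fls_X ^ 2 + fls_X_inv ^ 2 + 2"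
    by (simp add: algebra_simps power2_eq_square)
  have "poly_fls [:c + 2, 0, -1:] fls_X_plus_inv =
      fls_const (c + 2) - fls_X_plus_inv * fls_X_plus_inv"
    by (simp add: fls_const_uminus) (simp add: algebra_simps)
  also have "fls_const (c + 2) = fls_const c + 2"
    using fls_of_nat[of 2] by (simp flip: fls_plus_const)
  finally show ?thesis unfolding square by simp
qed

lemma ct_prod_quadratic:
  assumes "\<forall>i\<in>{1..m}. x i \<noteq> 0"
  shows "ct (\<Prod>j<m. [:(x (Suc j) + inverse (x (Suc j))) ^ 2, 0, -1:]) =
    cbinom_esym_sum m (\<lambda>i. x i ^ 2 + inverse (x i ^ 2))"
proof -
  let ?T2 = "fls_X ^ 2 + fls_X_inv ^ 2 :: complex fls"
  let ?c = "\<lambda>i. x i ^ 2 + inverse (x i ^ 2)"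
  have "poly_fls (\<Prod>j<m. [:(x (Suc j) + inverse (x (Suc j))) ^ 2, 0, -1:]) fls_X_plus_inv =
      (\<Prod>j<m. - (?T2 - fls_const (?c (Suc j))))"
  proof (unfold poly_fls_prod, intro prod.cong refl)
    fix j assume "j \<in> {..<m}"
    then have "x (Suc j) \<noteq> 0" using assms by auto
    then have "(x (Suc j) + inverse (x (Suc j))) ^ 2 = ?c (Suc j) + 2"
      by (simp add: field_simps power2_eq_square)
    then show "poly_fls [:(x (Suc j) + inverse (x (Suc j))) ^ 2, 0, -1:] fls_X_plus_inv =
        - (?T2 - fls_const (?c (Suc j)))"
      by (simp only: poly_fls_quadratic minus_diff_eq)
  qed
  also have "\<dots> = (-1) ^ m * (\<Prod>j<m. ?T2 - fls_const (?c (Suc j)))"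
    by (simp only: prod_uminus card_lessThan)
  also have "(-1 :: complex fls) ^ m = fls_const ((-1) ^ m)"
    by (simp add: fls_const_power)
  finally show ?thesis
    using fls_nth_prod_sub_const_eq_cbinom_esym_sum[OF fls_nth_power_X_plus_X_inv[of 2],
        where f = "\<lambda>i. x i ^ 2 + inverse (x i ^ 2)"]
    by (simp add: ct_def flip: power_add)
qed

lemma sign2_eq: "sign2 m q p = (-1) ^ (q + Suc m + Suc (rho m q) + (p + m))"
  by (simp add: sign2_def power_add)

lemma term2_eq_0_left:
  assumes "q \<le> Suc m" "p < q" "odd (q - 1 - p)"
  shows "term2 m u q p = 0"
proof -
  have "even (q - p)" using assms by presburger
  then obtain z where "q - p = 2 * z" by (elim evenE)
  then have "rho m p = rho m q + 2 * z" using assms by (simp add: rho_def)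
  then have "ct_div (cheb (rho m q) * cheb (rho m p)) = 0"
    by (simp add: ct_div_cheb_mult_cheb_even)
  then show ?thesis using assms by (simp add: term2_def)
qed

lemma term2_eq_0_right:
  assumes "q \<le> p" "p \<le> m" "odd (p - q)"
  shows "term2 m u q p = 0"
proof -
  have "even (Suc p - q)" using assms by presburger
  then obtain z where "Suc p - q = 2 * z" by (elim evenE)
  then have rho_q: "rho m q = rho m (Suc p) + 2 * z" using assms by (simp add: rho_def)
  have "ct_div (cheb (rho m (Suc p)) * cheb (rho m (Suc p) + 2 * z)) = 0"
    by (rule ct_div_cheb_mult_cheb_even)
  then have "ct_div (cheb (rho m q) * cheb (rho m (Suc p))) = 0"
    unfolding rho_q by (simp only: mult.commute[of "cheb (rho m (Suc p) + 2 * z)"])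
  then show ?thesis using assms by (simp add: term2_def)
qed

lemma even_eq_of_add_even:
  "(n :: nat) + 2 * k = 4 * l + b \<Longrightarrow> even n \<longleftrightarrow> even b"
  by presburger

lemma term2_left_eq_eta2:
  assumes "b \<le> m" "z \<le> (m - b) div 2"
  shows "term2 m u (Suc m - b) (m - b - 2 * z) = of_int (eta2 z b) * num21 m u b z"
proof -
  let ?q = "Suc m - b" and ?p = "m - b - 2 * z"
  have minor: "minor2 m u ?q ?p = num21 m u b z"
    unfolding minor2_def num21_def
    by (rule cheb_det_cong) (use assms in \<open>auto simp: rho_def insert_index_def part21_def\<close>)
  have rho_q: "rho m ?q = Suc b" and rho_p: "rho m ?p = Suc b + 2 * z + 1"
    using assms by (auto simp: rho_def)
  have ip: "insert_index ?q ?p = ?p" using assms by simp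
  have ct: "ct_div (cheb (rho m ?q) * cheb (rho m (insert_index ?q ?p))) =
      of_nat (if even z then (Suc b + 1) div 2 else Suc b div 2)"
    unfolding ip rho_q rho_p by (rule ct_div_cheb_mult_cheb_odd)
  have "?q + Suc m + Suc (rho m ?q) + (?p + m) + 2 * (b + z) = 4 * (m + 1) + b"
    unfolding rho_q using assms by simp
  then have "even (?q + Suc m + Suc (rho m ?q) + (?p + m)) \<longleftrightarrow> even b"
    by (rule even_eq_of_add_even)
  then have "sign2 m ?q ?p = (-1) ^ b"
    unfolding sign2_eq by (simp add: minus_one_power_iff)
  then show ?thesis unfolding term2_def minor ct eta2_eq by simp
qed

lemma term2_right_eq_eta2:
  assumes "b \<le> m" "z \<le> (m - b) div 2"
  shows "term2 m u (m - b - 2 * z) (m - b) = of_int (eta2 z b) * num21 m u b z"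
proof -
  let ?q = "m - b - 2 * z" and ?p = "m - b"
  have minor: "minor2 m u ?q ?p = num21 m u b z"
    unfolding minor2_def num21_def
    by (rule cheb_det_cong) (use assms in \<open>auto simp: rho_def insert_index_def part21_def\<close>)
  have rho_q: "rho m ?q = Suc b + 2 * z + 1" and rho_p: "rho m (Suc ?p) = Suc b"
    using assms by (auto simp: rho_def)
  have ip: "insert_index ?q ?p = Suc ?p" by simp
  have ct: "ct_div (cheb (rho m ?q) * cheb (rho m (insert_index ?q ?p))) =
      of_nat (if even z then (Suc b + 1) div 2 else Suc b div 2)"
    unfolding ip rho_q rho_p mult.commute[of "cheb (Suc b + 2 * z + 1)"] by (rule ct_div_cheb_mult_cheb_odd)
  have "?q + Suc m + Suc (rho m ?q) + (?p + m) + 2 * b = 4 * (m + 1) + b"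
    unfolding rho_q using assms by simp
  then have "even (?q + Suc m + Suc (rho m ?q) + (?p + m)) \<longleftrightarrow> even b"
    by (rule even_eq_of_add_even)
  then have "sign2 m ?q ?p = (-1) ^ b"
    unfolding sign2_eq by (simp add: minus_one_power_iff)
  then show ?thesis unfolding term2_def minor ct eta2_eq by simp
qed

lemma sum_term2_left:
  "(\<Sum>q<Suc (Suc m). \<Sum>p<q. term2 m u q p) =
     (\<Sum>b=0..m. \<Sum>z=0..(m - b) div 2. of_int (eta2 z b) * num21 m u b z)"
proof -
  have inner: "(\<Sum>p<Suc q. term2 m u (Suc q) p) = (\<Sum>z=0..q div 2. term2 m u (Suc q) (q - 2 * z))"
    if "q \<le> m" for q
  proof -
    have "(\<Sum>p<Suc q. term2 m u (Suc q) p) =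
        (\<Sum>p\<in>{0..q}. if even (q - p) then term2 m u (Suc q) p else 0)"
    proof (rule sum.cong)
      fix p assume "p \<in> {0..q}"
      then show "term2 m u (Suc q) p = (if even (q - p) then term2 m u (Suc q) p else 0)"
        using that term2_eq_0_left[of "Suc q" m p u] by auto
    qed auto
    also have "\<dots> = (\<Sum>z=0..q div 2. term2 m u (Suc q) (q - 2 * z))"
      by (rule sum_even_diff_reindex)
    finally show ?thesis .
  qed
  have "(\<Sum>q<Suc (Suc m). \<Sum>p<q. term2 m u q p) = (\<Sum>q<Suc m. \<Sum>p<Suc q. term2 m u (Suc q) p)"
    by (subst sum.lessThan_Suc_shift) simp
  also have "\<dots> = (\<Sum>q\<in>{0..m}. \<Sum>z=0..q div 2. term2 m u (Suc q) (q - 2 * z))"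
  proof (rule sum.cong)
    show "{..<Suc m} = {0..m}" by auto
  next
    fix q assume "q \<in> {0..m}"
    then show "(\<Sum>p<Suc q. term2 m u (Suc q) p) = (\<Sum>z=0..q div 2. term2 m u (Suc q) (q - 2 * z))"
      by (intro inner) simp
  qed
  also have "\<dots> = (\<Sum>b\<in>{0..m}. \<Sum>z=0..(m - b) div 2. term2 m u (Suc (m - b)) (m - b - 2 * z))"
    by (subst sum.atLeastAtMost_rev) simp
  also have "\<dots> = (\<Sum>b=0..m. \<Sum>z=0..(m - b) div 2. of_int (eta2 z b) * num21 m u b z)"
  proof (intro sum.cong refl)
    fix b z assume "b \<in> {0..m}" "z \<in> {0..(m - b) div 2}"
    then show "term2 m u (Suc (m - b)) (m - b - 2 * z) = of_int (eta2 z b) * num21 m u b z"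
      using term2_left_eq_eta2[of b m z u] by (simp add: Suc_diff_le)
  qed
  finally show ?thesis .
qed

lemma sum_term2_right:
  "(\<Sum>q<Suc (Suc m). \<Sum>p\<in>{q..m}. term2 m u q p) =
     (\<Sum>b=0..m. \<Sum>z=0..(m - b) div 2. of_int (eta2 z b) * num21 m u b z)"
proof -
  have "(\<Sum>q<Suc (Suc m). \<Sum>p\<in>{q..m}. term2 m u q p) =
      (\<Sum>q\<in>{..<Suc (Suc m)}. \<Sum>p\<in>{p. p \<in> {0..m} \<and> q \<le> p}. term2 m u q p)"
    by (intro sum.cong refl) auto
  also have "\<dots> = (\<Sum>p\<in>{0..m}. \<Sum>q\<in>{q. q \<in> {..<Suc (Suc m)} \<and> q \<le> p}. term2 m u q p)"
    by (rule sum.swap_restrict) auto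
  also have "\<dots> = (\<Sum>p\<in>{0..m}. \<Sum>q\<in>{0..p}. if even (p - q) then term2 m u q p else 0)"
  proof (intro sum.cong refl)
    fix p assume p: "p \<in> {0..m}"
    show "{q. q \<in> {..<Suc (Suc m)} \<and> q \<le> p} = {0..p}" using p by auto
    fix q assume "q \<in> {0..p}"
    then show "term2 m u q p = (if even (p - q) then term2 m u q p else 0)"
      using p term2_eq_0_right[of q p m u] by auto
  qed
  also have "\<dots> = (\<Sum>p\<in>{0..m}. \<Sum>z=0..p div 2. term2 m u (p - 2 * z) p)"
    by (rule sum.cong[OF refl], rule sum_even_diff_reindex)
  also have "\<dots> = (\<Sum>b\<in>{0..m}. \<Sum>z=0..(m - b) div 2. term2 m u (m - b - 2 * z) (m - b))"
    by (subst sum.atLeastAtMost_rev) simp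
  also have "\<dots> = (\<Sum>b=0..m. \<Sum>z=0..(m - b) div 2. of_int (eta2 z b) * num21 m u b z)"
  proof (intro sum.cong refl)
    fix b z assume "b \<in> {0..m}" "z \<in> {0..(m - b) div 2}"
    then show "term2 m u (m - b - 2 * z) (m - b) = of_int (eta2 z b) * num21 m u b z"
      by (intro term2_right_eq_eta2) auto
  qed
  finally show ?thesis .
qed

lemma sum_lessThan_split_diagonal:
  fixes f :: "nat \<Rightarrow> nat \<Rightarrow> 'a::comm_monoid_add"
  assumes "n \<le> Suc (Suc m)"
  shows "(\<Sum>q<n. \<Sum>p<Suc m. f q p) = (\<Sum>q<n. \<Sum>p<q. f q p) + (\<Sum>q<n. \<Sum>p\<in>{q..m}. f q p)"
proof -
  have "(\<Sum>p<Suc m. f q p) = (\<Sum>p<q. f q p) + (\<Sum>p\<in>{q..m}. f q p)" if "q < n" for q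
  proof -
    have "{..<Suc m} = {..<q} \<union> {q..m}" using that assms by auto
    moreover have "sum (f q) ({..<q} \<union> {q..m}) = sum (f q) {..<q} + sum (f q) {q..m}"
      by (rule sum.union_disjoint) auto
    ultimately show ?thesis by simp
  qed
  then show ?thesis by (simp add: sum.distrib)
qed

text \<open>Each \<open>\<eta>\<^sub>2\<close>-term arises twice: from the pair of rows deleted in either order of
  the two Laplace expansions.\<close>
lemma sum_term2:
  "(\<Sum>q<Suc (Suc m). \<Sum>p<Suc m. term2 m u q p) =
     2 * (\<Sum>b=0..m. \<Sum>z=0..(m - b) div 2. of_int (eta2 z b) * num21 m u b z)"
  unfolding sum_lessThan_split_diagonal[OF order_refl] sum_term2_left sum_term2_right
  by (rule mult_2[symmetric])

lemma sum_eta2_sp_char_part21_eq_cbinom_esym_sum: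
  assumes x: "\<forall>i\<in>{1..m}. x i \<noteq> 0" "sp_den m x \<noteq> 0"
  shows "(\<Sum>b=0..m. \<Sum>z=0..(m - b) div 2.
            of_int (eta2 z b) * sp_char m (part21 (m - b - 2 * z) (2 * z)) x)
       = cbinom_esym_sum m (\<lambda>i. x i ^ 2 + inverse (x i ^ 2))"
proof -
  define u where "u = (\<lambda>j. x (Suc j) + inverse (x (Suc j)))"
  define D where "D = cheb_det m (\<lambda>i. m - i) u"
  define S where "S = (\<Sum>b=0..m. \<Sum>z=0..(m - b) div 2. of_int (eta2 z b) * num21 m u b z)"
  have "D \<noteq> 0" using cheb_det_sp_den_nonzero[OF x] by (simp add: D_def u_def)
  have chi: "sp_char m (part21 (m - b - 2 * z) (2 * z)) x = num21 m u b z / D" for b z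
    using sp_char_eq_cheb_det_ratio[OF x] by (simp add: D_def u_def num21_def)
  let ?L = "\<Sum>q<Suc (Suc m). \<Sum>p<Suc m. smult (sign2 m q p * minor2 m u q p)
      (cheb (rho m q) * cheb (rho m (insert_index q p)))"
  let ?R = "smult (2 * D) ([:0, 1:] * (\<Prod>j<m. [:u j ^ 2, 0, -1:]))"
  have "poly ?L v = poly ?R v" for v
  proof -
    have "poly ?L v = cheb_det (Suc (Suc m)) (rho m) ((u(m := v))(Suc m := - v))"
      unfolding cheb_det_laplace_two_columns by (simp only: poly_sum poly_smult)
    also have "\<dots> = 2 * D * (v * (\<Prod>j<m. u j ^ 2 - v ^ 2))"
      unfolding cheb_det_adjoin_pm_column D_def by (simp only: mult.assoc)
    also have "\<dots> = poly ?R v"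
      by (simp add: poly_prod power2_eq_square)
    finally show ?thesis .
  qed
  then have "?L = ?R" using poly_eq_poly_eq_iff by blast
  then have "ct_div ?L = ct_div ?R" by (rule arg_cong)
  moreover have "ct_div ?L = 2 * S"
    unfolding ct_div_sum ct_div_smult S_def sum_term2[symmetric] term2_def ..
  moreover have "ct_div ?R = 2 * D * cbinom_esym_sum m (\<lambda>i. x i ^ 2 + inverse (x i ^ 2))"
    unfolding ct_div_smult ct_div_X_mult u_def ct_prod_quadratic[OF x(1)] ..
  ultimately have "2 * S = 2 * D * cbinom_esym_sum m (\<lambda>i. x i ^ 2 + inverse (x i ^ 2))"
    by (simp only:)
  then have S_eq: "S = D * cbinom_esym_sum m (\<lambda>i. x i ^ 2 + inverse (x i ^ 2))"
    by simp
  have "(\<Sum>b=0..m. \<Sum>z=0..(m - b) div 2.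
            of_int (eta2 z b) * sp_char m (part21 (m - b - 2 * z) (2 * z)) x) = S / D"
    unfolding chi S_def sum_divide_distrib by (simp only: times_divide_eq_right)
  also have "\<dots> = cbinom_esym_sum m (\<lambda>i. x i ^ 2 + inverse (x i ^ 2))"
    using S_eq \<open>D \<noteq> 0\<close> by simp
  finally show ?thesis .
qed

theorem mainTheorem5:
  fixes m :: nat and x :: "nat \<Rightarrow> complex"
  assumes "m \<ge> 1"
    and "\<forall>i\<in>{1..m}. x i \<noteq> 0"
    and "sp_den m x \<noteq> 0"
    and "sp_den m (\<lambda>i. x i ^ 2) \<noteq> 0"
  shows "(\<Sum>b=0..m. \<Sum>z=0..(m - b) div 2.
            of_int (eta2 z b) * sp_char m (part21 (m - b - 2 * z) (2 * z)) x)
       = (\<Sum>l=0..m div 2. of_nat ((2 * l) choose l) *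
            (\<Sum>S | S \<subseteq> {1..m} \<and> card S = m - 2 * l.
               \<Prod>i\<in>S. x i ^ 2 + inverse (x i ^ 2)))
     \<and> (\<Sum>l=0..m div 2. of_nat ((2 * l) choose l) *
            (\<Sum>S | S \<subseteq> {1..m} \<and> card S = m - 2 * l.
               \<Prod>i\<in>S. x i ^ 2 + inverse (x i ^ 2)))
       = (\<Sum>j=0..m div 2. sp_char m (part1 (m - 2 * j)) (\<lambda>i. x i ^ 2))"
proof -
  have "\<forall>i\<in>{1..m}. x i ^ 2 \<noteq> 0" using assms(2) by simp
  then show ?thesis
    using sum_eta2_sp_char_part21_eq_cbinom_esym_sum[OF assms(2,3)]
      cbinom_esym_sum_eq_sum_sp_char_part1[of m "\<lambda>i. x i ^ 2", OF _ assms(4)]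
    by (simp add: cbinom_esym_sum_def)
qed
end
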